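(* Let $f\colon E\to\mathbb{R}$ be smooth and let $Z$ be the vector field along $E$ with components $Z^\mu=g^{\mu\nu}\partial f/\partial y^\nu$. Then \[ \nabla^{HC}\cdot Z=g^{\mu\nu}\Big(\frac{\delta}{\delta x^\mu}\frac{\partial f}{\partial y^\nu}-\Gamma^\alpha_{\nu\mu}\frac{\partial f}{\partial y^\alpha}\Big)=\frac{\partial}{\partial y^\nu}\Big(g^{\nu\mu}\frac{\delta f}{\delta x^\mu}\Big)+2I^\mu\frac{\delta f}{\delta x^\mu}+J^\alpha\frac{\partial f}{\partial y^\alpha}, \] where $I^\mu=g^{\mu\nu}I_\nu$ and $J^\alpha=g^{\alpha\beta}J_\beta$.
   Context: $M$ smooth $n$-manifold, $E=TM\setminus0$, induced coordinates $\{x^\mu,y^\mu\}$. $\mathscr{L}\colon E\to\mathbb{R}$ smooth, positively homogeneous of degree two in $y$, with non-degenerate $g_{\mu\nu}=\partial^2\mathscr{L}/\partial y^\mu\partial y^\nu$, inverse $g^{\mu\nu}$. $C_{\alpha\beta\gamma}=\tfrac12\partial g_{\beta\gamma}/\partial y^\alpha$, $I_\gamma=g^{\alpha\beta}C_{\alpha\beta\gamma}$. Spray $2G^\alpha=g^{\alpha\delta}\big(\frac{\partial^2\mathscr{L}}{\partial x^\gamma\partial y^\delta}y^\gamma-\frac{\partial\mathscr{L}}{\partial x^\delta}\big)$, $N^\alpha_\mu=G^\alpha_\mu=\partial G^\alpha/\partial y^\mu$, Berwald coefficients $G^\alpha_{\mu\nu}=\partial G^\alpha_\mu/\partial y^\nu$,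 $\frac{\delta}{\delta x^\mu}=\frac{\partial}{\partial x^\mu}-N^\nu_\mu\frac{\partial}{\partial y^\nu}$, $\Gamma^\alpha_{\beta\gamma}=\tfrac12 g^{\alpha\sigma}\big(\frac{\delta g_{\sigma\gamma}}{\delta x^\beta}+\frac{\delta g_{\sigma\beta}}{\delta x^\gamma}-\frac{\delta g_{\beta\gamma}}{\delta x^\sigma}\big)$. Landsberg tensor $L^\alpha_{\beta\gamma}=G^\alpha_{\beta\gamma}-\Gamma^\alpha_{\beta\gamma}$, and $J_\alpha=L^\mu_{\alpha\mu}$. $(\nabla^{HC}_\alpha Z)^\beta=\frac{\delta Z^\beta}{\delta x^\alpha}+\Gamma^\beta_{\mu\alpha}Z^\mu$, $\nabla^{HC}\cdot Z=(\nabla^{HC}_\alpha Z)^\alpha$. *)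

theory Defs
  imports "HOL-Analysis.Analysis"
begin

text \<open>A point of E = TM minus the zero section, in induced
coordinates, is a pair z = (x, y) of vectors in R^n; over a chart domain U of M,
E is U x (R^n - {0}).\<close>

type_synonym 'n pt = "(real^'n) \<times> (real^'n)"

fun Ck :: "nat \<Rightarrow> ('n::finite) pt set \<Rightarrow> ('n pt \<Rightarrow> real) \<Rightarrow> bool" where
  "Ck 0 S F = continuous_on S F"
| "Ck (Suc k) S F = (F differentiable_on S \<and>
      (\<forall>v. Ck k S (\<lambda>z. frechet_derivative F (at z) v)))"

definition smooth_on :: "('n::finite) pt set \<Rightarrow> ('n pt \<Rightarrow> real) \<Rightarrow> bool" where
  "smooth_on S F = (\<forall>k. Ck k S F)"

definition px :: "'n::finite \<Rightarrow> ('n pt \<Rightarrow> real) \<Rightarrow> 'n pt \<Rightarrow> real" where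
  "px \<mu> F z = frechet_derivative F (at z) (axis \<mu> 1, 0)"

definition py :: "'n::finite \<Rightarrow> ('n pt \<Rightarrow> real) \<Rightarrow> 'n pt \<Rightarrow> real" where
  "py \<mu> F z = frechet_derivative F (at z) (0, axis \<mu> 1)"

definition gmat :: "('n::finite pt \<Rightarrow> real) \<Rightarrow> 'n pt \<Rightarrow> real^'n^'n" where
  "gmat L z = (\<chi> \<mu> \<nu>. py \<mu> (py \<nu> L) z)"

definition glow :: "('n::finite pt \<Rightarrow> real) \<Rightarrow> 'n pt \<Rightarrow> 'n \<Rightarrow> 'n \<Rightarrow> real" where
  "glow L z \<mu> \<nu> = gmat L z $ \<mu> $ \<nu>"

definition gup :: "('n::finite pt \<Rightarrow> real) \<Rightarrow> 'n pt \<Rightarrow> 'n \<Rightarrow> 'n \<Rightarrow> real" where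
  "gup L z \<mu> \<nu> = matrix_inv (gmat L z) $ \<mu> $ \<nu>"

definition Cartan :: "('n::finite pt \<Rightarrow> real) \<Rightarrow> 'n pt \<Rightarrow> 'n \<Rightarrow> 'n \<Rightarrow> 'n \<Rightarrow> real" where
  "Cartan L z a b c = (1/2) * py a (\<lambda>w. glow L w b c) z"

definition Ilow :: "('n::finite pt \<Rightarrow> real) \<Rightarrow> 'n pt \<Rightarrow> 'n \<Rightarrow> real" where
  "Ilow L z c = (\<Sum>a\<in>UNIV. \<Sum>b\<in>UNIV. gup L z a b * Cartan L z a b c)"

text \<open>Spray coefficients G^alpha (so that 2 G^alpha is the given expression).\<close>
definition Gspray :: "('n::finite pt \<Rightarrow> real) \<Rightarrow> 'n pt \<Rightarrow> 'n \<Rightarrow> real" where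
  "Gspray L z \<alpha> = (1/2) * (\<Sum>\<delta>\<in>UNIV. gup L z \<alpha> \<delta> *
      ((\<Sum>\<gamma>\<in>UNIV. px \<gamma> (py \<delta> L) z * (snd z $ \<gamma>)) - px \<delta> L z))"

definition Nconn :: "('n::finite pt \<Rightarrow> real) \<Rightarrow> 'n pt \<Rightarrow> 'n \<Rightarrow> 'n \<Rightarrow> real" where
  "Nconn L z \<alpha> \<mu> = py \<mu> (\<lambda>w. Gspray L w \<alpha>) z"

definition Berwald :: "('n::finite pt \<Rightarrow> real) \<Rightarrow> 'n pt \<Rightarrow> 'n \<Rightarrow> 'n \<Rightarrow> 'n \<Rightarrow> real" where
  "Berwald L z \<alpha> \<mu> \<nu> = py \<nu> (\<lambda>w. Nconn L w \<alpha> \<mu>) z"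

definition dlt :: "('n::finite pt \<Rightarrow> real) \<Rightarrow> 'n \<Rightarrow> ('n pt \<Rightarrow> real) \<Rightarrow> 'n pt \<Rightarrow> real" where
  "dlt L \<mu> F z = px \<mu> F z - (\<Sum>\<nu>\<in>UNIV. Nconn L z \<nu> \<mu> * py \<nu> F z)"

definition Gam :: "('n::finite pt \<Rightarrow> real) \<Rightarrow> 'n pt \<Rightarrow> 'n \<Rightarrow> 'n \<Rightarrow> 'n \<Rightarrow> real" where
  "Gam L z \<alpha> \<beta> \<gamma> = (1/2) * (\<Sum>\<sigma>\<in>UNIV. gup L z \<alpha> \<sigma> *
      (dlt L \<beta> (\<lambda>w. glow L w \<sigma> \<gamma>) z + dlt L \<gamma> (\<lambda>w. glow L w \<sigma> \<beta>) z
       - dlt L \<sigma> (\<lambda>w. glow L w \<beta> \<gamma>) z))"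

definition Lands :: "('n::finite pt \<Rightarrow> real) \<Rightarrow> 'n pt \<Rightarrow> 'n \<Rightarrow> 'n \<Rightarrow> 'n \<Rightarrow> real" where
  "Lands L z \<alpha> \<beta> \<gamma> = Berwald L z \<alpha> \<beta> \<gamma> - Gam L z \<alpha> \<beta> \<gamma>"

definition Jlow :: "('n::finite pt \<Rightarrow> real) \<Rightarrow> 'n pt \<Rightarrow> 'n \<Rightarrow> real" where
  "Jlow L z \<alpha> = (\<Sum>\<mu>\<in>UNIV. Lands L z \<mu> \<alpha> \<mu>)"

definition Iup :: "('n::finite pt \<Rightarrow> real) \<Rightarrow> 'n pt \<Rightarrow> 'n \<Rightarrow> real" where
  "Iup L z \<mu> = (\<Sum>\<nu>\<in>UNIV. gup L z \<mu> \<nu> * Ilow L z \<nu>)"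

definition Jup :: "('n::finite pt \<Rightarrow> real) \<Rightarrow> 'n pt \<Rightarrow> 'n \<Rightarrow> real" where
  "Jup L z \<alpha> = (\<Sum>\<beta>\<in>UNIV. gup L z \<alpha> \<beta> * Jlow L z \<beta>)"

text \<open>HC divergence of a vector field Z along E (Z w \<beta> = Z^\<beta> at w):
  sum over alpha of (nabla^HC_alpha Z)^alpha.\<close>
definition divHC :: "('n::finite pt \<Rightarrow> real) \<Rightarrow> ('n pt \<Rightarrow> 'n \<Rightarrow> real) \<Rightarrow> 'n pt \<Rightarrow> real" where
  "divHC L Z z = (\<Sum>\<alpha>\<in>UNIV. dlt L \<alpha> (\<lambda>w. Z w \<alpha>) z
                      + (\<Sum>\<mu>\<in>UNIV. Gam L z \<alpha> \<mu> \<alpha> * Z z \<mu>))"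

end

theory Submission
  imports Defs
begin

text \<open>
  In a chart both identities are index computations. The first is the product rule for
  delta/delta x^mu applied to g^{mu nu} df/dy^nu, combined with the compatibility
  delta_a g_{bc} = g_{br} Gamma^r_{ac} + g_{cr} Gamma^r_{ab}, which is built into the definition of
  Gamma. For the second, d g^{nu mu}/dy^nu = -2 I^mu, and the commutator
  [d/dy^nu, delta/delta x^mu] = - G^a_{mu nu} d/dy^a produces the Berwald coefficients, so what remains
  is the trace g^{mu nu} L^a_{nu mu} = J^a. That holds because the lowered Landsberg tensor is totally
  symmetric: by homogeneity (Euler's relation) delta L/delta x^k = 0, and differentiating this twice in
  y gives delta_k g_{il} = T_{kil} + g_{lj} G^j_{ki} + g_{ij} G^j_{kl} with the totally symmetric
  T_{kil} = (dL/dy^j) dG^j_{ki}/dy^l; hence L^a_{bc} = G^a_{bc} - Gamma^a_{bc} = -1/2 g^{as} T_{sbc}.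
\<close>

lemma if_one_zero_mult [simp]: "(if P then 1 else 0) * x = (if P then x else (0::'a::semiring_1))"
  by simp

lemma mult_if_one_zero [simp]: "x * (if P then 1 else 0) = (if P then x else (0::'a::semiring_1))"
  by simp

lemma sum_rotate3:
  "(\<Sum>b\<in>B. \<Sum>c\<in>C. \<Sum>a\<in>A. F a b c) = (\<Sum>a\<in>A. \<Sum>b\<in>B. \<Sum>c\<in>C. (F a b c :: 'x::comm_monoid_add))"
proof -
  have "(\<Sum>b\<in>B. \<Sum>c\<in>C. \<Sum>a\<in>A. F a b c) = (\<Sum>b\<in>B. \<Sum>a\<in>A. \<Sum>c\<in>C. F a b c)"
    by (rule sum.cong[OF refl], rule sum.swap)
  also have "\<dots> = (\<Sum>a\<in>A. \<Sum>b\<in>B. \<Sum>c\<in>C. F a b c)"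
    by (rule sum.swap)
  finally show ?thesis .
qed

lemma vec_eq_sum_axis: "(y::real^'k::finite) = (\<Sum>a\<in>UNIV. y $ a *\<^sub>R axis a 1)"
  by (simp add: vec_eq_iff axis_def)


section \<open>Fr\'echet derivatives\<close>

lemma frechet_derivative_apply:
  "(F has_derivative F') (at z) \<Longrightarrow> frechet_derivative F (at z) v = F' v"
  by (drule frechet_derivative_at) simp

lemma frechet_derivative_cong_open:
  assumes "open S" "z \<in> S" "\<And>w. w \<in> S \<Longrightarrow> F w = G w"
  shows "frechet_derivative F (at z) = frechet_derivative G (at z)"
proof -
  have "(F has_derivative F') (at z) \<longleftrightarrow> (G has_derivative F') (at z)" for F'
  proof
    assume "(F has_derivative F') (at z)"
    then show "(G has_derivative F') (at z)"
      using has_derivative_transform_within_open[OF _ assms(1,2)] assms(3) by blast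
  next
    assume "(G has_derivative F') (at z)"
    then show "(F has_derivative F') (at z)"
      using has_derivative_transform_within_open[OF _ assms(1,2), of G F' UNIV F] assms(3) by metis
  qed
  then show ?thesis unfolding frechet_derivative_def by simp
qed

lemmas has_frechet_derivative = frechet_derivative_works[THEN iffD1]

lemma frechet_derivative_add:
  "F differentiable (at z) \<Longrightarrow> G differentiable (at z) \<Longrightarrow>
   frechet_derivative (\<lambda>w. F w + G w) (at z) v = frechet_derivative F (at z) v + frechet_derivative G (at z) v"
  by (rule frechet_derivative_apply[OF has_derivative_add[OF has_frechet_derivative has_frechet_derivative]])

lemma frechet_derivative_diff:
  "F differentiable (at z) \<Longrightarrow> G differentiable (at z) \<Longrightarrow>
   frechet_derivative (\<lambda>w. F w - G w) (at z) v = frechet_derivative F (at z) v - frechet_derivative G (at z) v"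
  by (rule frechet_derivative_apply[OF has_derivative_diff[OF has_frechet_derivative has_frechet_derivative]])

lemma frechet_derivative_mult:
  fixes F G :: "'a::real_normed_vector \<Rightarrow> real"
  assumes "F differentiable (at z)" "G differentiable (at z)"
  shows "frechet_derivative (\<lambda>w. F w * G w) (at z) v
    = frechet_derivative F (at z) v * G z + F z * frechet_derivative G (at z) v"
  using frechet_derivative_apply[OF has_derivative_mult[OF has_frechet_derivative[OF assms(1)]
      has_frechet_derivative[OF assms(2)]]]
  by (simp add: algebra_simps)

lemma frechet_derivative_sum:
  "finite I \<Longrightarrow> (\<And>i. i \<in> I \<Longrightarrow> F i differentiable (at z)) \<Longrightarrow>
   frechet_derivative (\<lambda>w. \<Sum>i\<in>I. F i w) (at z) v = (\<Sum>i\<in>I. frechet_derivative (F i) (at z) v)"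
  by (rule frechet_derivative_apply[OF has_derivative_sum[OF has_frechet_derivative]])

lemma frechet_derivative_cmult:
  fixes F :: "'a::real_normed_vector \<Rightarrow> real"
  shows "F differentiable (at z) \<Longrightarrow>
    frechet_derivative (\<lambda>w. c * F w) (at z) v = c * frechet_derivative F (at z) v"
  using frechet_derivative_mult[of "\<lambda>w. c" z F v] by simp

lemma DERIV_along_line:
  fixes G :: "'a::real_normed_vector \<Rightarrow> real"
  assumes "G differentiable (at (c + t *\<^sub>R d))"
  shows "((\<lambda>s. G (c + s *\<^sub>R d)) has_real_derivative frechet_derivative G (at (c + t *\<^sub>R d)) d) (at t)"
proof -
  have "((\<lambda>s. c + s *\<^sub>R d) has_derivative (\<lambda>h. h *\<^sub>R d)) (at t)"
    by (auto intro!: derivative_eq_intros)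
  from has_derivative_compose[OF this has_frechet_derivative[OF assms]]
  have "((\<lambda>s. G (c + s *\<^sub>R d)) has_derivative
        (\<lambda>h. frechet_derivative G (at (c + t *\<^sub>R d)) (h *\<^sub>R d))) (at t)"
    by simp
  moreover have "(\<lambda>h. frechet_derivative G (at (c + t *\<^sub>R d)) (h *\<^sub>R d))
      = (*) (frechet_derivative G (at (c + t *\<^sub>R d)) d)"
    using linear_scale[OF linear_frechet_derivative[OF assms]] by (simp add: fun_eq_iff mult.commute)
  ultimately show ?thesis unfolding has_field_derivative_def by simp
qed

text \<open>Both mixed partial derivatives are limits of the second difference
  (F (z + r u + r v) - F (z + r v) - F (z + r u) + F z) / r^2, each reached by two applications of
  the mean value theorem.\<close>

lemma second_difference_mean_value:
  fixes F :: "'a::real_normed_vector \<Rightarrow> real"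
  assumes r: "r > 0"
    and dF: "\<And>s t. 0 \<le> s \<Longrightarrow> s \<le> r \<Longrightarrow> 0 \<le> t \<Longrightarrow> t \<le> r \<Longrightarrow>
      F differentiable (at (z + s *\<^sub>R u + t *\<^sub>R v))"
    and dFu: "\<And>s t. 0 \<le> s \<Longrightarrow> s \<le> r \<Longrightarrow> 0 \<le> t \<Longrightarrow> t \<le> r \<Longrightarrow>
      (\<lambda>w. frechet_derivative F (at w) u) differentiable (at (z + s *\<^sub>R u + t *\<^sub>R v))"
  obtains \<sigma> \<tau> where "0 < \<sigma>" "\<sigma> < r" "0 < \<tau>" "\<tau> < r"
    "F (z + r *\<^sub>R u + r *\<^sub>R v) - F (z + r *\<^sub>R v) - F (z + r *\<^sub>R u) + F z
      = r\<^sup>2 * frechet_derivative (\<lambda>w. frechet_derivative F (at w) u) (at (z + \<sigma> *\<^sub>R u + \<tau> *\<^sub>R v)) v"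
proof -
  define Fu where "Fu = (\<lambda>w. frechet_derivative F (at w) u)"
  define p where "p = (\<lambda>s. F ((z + r *\<^sub>R v) + s *\<^sub>R u) - F (z + s *\<^sub>R u))"
  have "\<exists>\<sigma>. 0 < \<sigma> \<and> \<sigma> < r \<and> p r - p 0 = (r - 0) * (Fu ((z + r *\<^sub>R v) + \<sigma> *\<^sub>R u) - Fu (z + \<sigma> *\<^sub>R u))"
  proof (rule MVT2[OF r])
    fix s :: real assume s: "0 \<le> s" "s \<le> r"
    show "(p has_real_derivative (Fu ((z + r *\<^sub>R v) + s *\<^sub>R u) - Fu (z + s *\<^sub>R u))) (at s)"
      unfolding p_def Fu_def using dF[of s r] dF[of s 0] s r
      by (intro DERIV_diff DERIV_along_line) (simp_all add: algebra_simps)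
  qed
  then obtain \<sigma> where \<sigma>: "0 < \<sigma>" "\<sigma> < r"
    and p: "p r - p 0 = r * (Fu ((z + r *\<^sub>R v) + \<sigma> *\<^sub>R u) - Fu (z + \<sigma> *\<^sub>R u))"
    by auto
  define q where "q = (\<lambda>t. Fu ((z + \<sigma> *\<^sub>R u) + t *\<^sub>R v))"
  have "\<exists>\<tau>. 0 < \<tau> \<and> \<tau> < r \<and> q r - q 0
      = (r - 0) * frechet_derivative Fu (at ((z + \<sigma> *\<^sub>R u) + \<tau> *\<^sub>R v)) v"
  proof (rule MVT2[OF r])
    fix t :: real assume t: "0 \<le> t" "t \<le> r"
    show "(q has_real_derivative frechet_derivative Fu (at ((z + \<sigma> *\<^sub>R u) + t *\<^sub>R v)) v) (at t)"
      unfolding q_def Fu_def using dFu[of \<sigma> t] t \<sigma> by (intro DERIV_along_line) simp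
  qed
  then obtain \<tau> where \<tau>: "0 < \<tau>" "\<tau> < r"
    and q: "q r - q 0 = r * frechet_derivative Fu (at ((z + \<sigma> *\<^sub>R u) + \<tau> *\<^sub>R v)) v"
    by auto
  have "F (z + r *\<^sub>R u + r *\<^sub>R v) - F (z + r *\<^sub>R v) - F (z + r *\<^sub>R u) + F z = r * (q r - q 0)"
    using p unfolding p_def q_def by (simp add: algebra_simps)
  with q have "F (z + r *\<^sub>R u + r *\<^sub>R v) - F (z + r *\<^sub>R v) - F (z + r *\<^sub>R u) + F z
      = r\<^sup>2 * frechet_derivative Fu (at (z + \<sigma> *\<^sub>R u + \<tau> *\<^sub>R v)) v"
    by (simp add: power2_eq_square)
  with \<sigma> \<tau> show ?thesis using that unfolding Fu_def by blast
qed

lemma parallelogram_in_ball: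
  fixes z u v :: "'a::real_normed_vector"
  assumes d: "d > 0"
  obtains r where "r > 0"
    "\<And>s t. 0 \<le> s \<Longrightarrow> s \<le> r \<Longrightarrow> 0 \<le> t \<Longrightarrow> t \<le> r \<Longrightarrow> z + s *\<^sub>R u + t *\<^sub>R v \<in> ball z d"
proof -
  define M where "M = norm u + norm v + 1"
  define r where "r = d / (2 * M)"
  have M: "M > 0" unfolding M_def by (simp add: add_nonneg_pos)
  have r: "r > 0" using d M by (simp add: r_def)
  have "r * (norm u + norm v) < r * M"
    using r by (intro mult_strict_left_mono) (simp_all add: M_def)
  also have "r * M = d / 2" using M by (simp add: r_def)
  finally have rd: "r * (norm u + norm v) < d" using d by simp
  have "z + s *\<^sub>R u + t *\<^sub>R v \<in> ball z d" if st: "0 \<le> s" "s \<le> r" "0 \<le> t" "t \<le> r" for s t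
  proof -
    have "dist (z + s *\<^sub>R u + t *\<^sub>R v) z \<le> s * norm u + t * norm v"
      using norm_triangle_ineq[of "s *\<^sub>R u" "t *\<^sub>R v"] st by (simp add: dist_norm)
    also have "\<dots> \<le> r * (norm u + norm v)"
      using st by (simp add: distrib_left add_mono mult_right_mono)
    finally show ?thesis using rd by (simp add: dist_commute)
  qed
  with r show ?thesis using that by blast
qed

lemma mixed_partials_meet_near:
  fixes F :: "'a::real_normed_vector \<Rightarrow> real"
  assumes d: "d > 0" and ball: "ball z d \<subseteq> S"
    and dF: "\<And>w. w \<in> S \<Longrightarrow> F differentiable (at w)"
    and dFu: "\<And>w. w \<in> S \<Longrightarrow> (\<lambda>w. frechet_derivative F (at w) u) differentiable (at w)"
    and dFv: "\<And>w. w \<in> S \<Longrightarrow> (\<lambda>w. frechet_derivative F (at w) v) differentiable (at w)"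
  obtains p q where "dist p z < d" "dist q z < d"
    "frechet_derivative (\<lambda>w. frechet_derivative F (at w) u) (at p) v
      = frechet_derivative (\<lambda>w. frechet_derivative F (at w) v) (at q) u"
proof -
  obtain r where r: "r > 0"
    and near: "\<And>s t. 0 \<le> s \<Longrightarrow> s \<le> r \<Longrightarrow> 0 \<le> t \<Longrightarrow> t \<le> r \<Longrightarrow> z + s *\<^sub>R u + t *\<^sub>R v \<in> ball z d"
    by (rule parallelogram_in_ball[OF d, where z=z and u=u and v=v]) blast
  have dF': "F differentiable (at (z + s *\<^sub>R u + t *\<^sub>R v))"
      "F differentiable (at (z + s *\<^sub>R v + t *\<^sub>R u))"
      "(\<lambda>w. frechet_derivative F (at w) u) differentiable (at (z + s *\<^sub>R u + t *\<^sub>R v))"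
      "(\<lambda>w. frechet_derivative F (at w) v) differentiable (at (z + s *\<^sub>R v + t *\<^sub>R u))"
    if "0 \<le> s" "s \<le> r" "0 \<le> t" "t \<le> r" for s t
    using ball near[OF that] near[OF that(3,4,1,2)] by (auto simp: add_ac intro: dF dFu dFv)
  obtain \<sigma> \<tau> where \<sigma>\<tau>: "0 < \<sigma>" "\<sigma> < r" "0 < \<tau>" "\<tau> < r"
    and A: "F (z + r *\<^sub>R u + r *\<^sub>R v) - F (z + r *\<^sub>R v) - F (z + r *\<^sub>R u) + F z
      = r\<^sup>2 * frechet_derivative (\<lambda>w. frechet_derivative F (at w) u) (at (z + \<sigma> *\<^sub>R u + \<tau> *\<^sub>R v)) v"
    by (rule second_difference_mean_value[OF r dF'(1) dF'(3)])
  obtain \<sigma>' \<tau>' where \<sigma>\<tau>': "0 < \<sigma>'" "\<sigma>' < r" "0 < \<tau>'" "\<tau>' < r"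
    and B: "F (z + r *\<^sub>R v + r *\<^sub>R u) - F (z + r *\<^sub>R u) - F (z + r *\<^sub>R v) + F z
      = r\<^sup>2 * frechet_derivative (\<lambda>w. frechet_derivative F (at w) v) (at (z + \<sigma>' *\<^sub>R v + \<tau>' *\<^sub>R u)) u"
    by (rule second_difference_mean_value[OF r dF'(2) dF'(4)])
  have swap: "z + r *\<^sub>R v + r *\<^sub>R u = z + r *\<^sub>R u + r *\<^sub>R v"
    by (simp add: add_ac)
  have "r\<^sup>2 * frechet_derivative (\<lambda>w. frechet_derivative F (at w) u) (at (z + \<sigma> *\<^sub>R u + \<tau> *\<^sub>R v)) v
      = r\<^sup>2 * frechet_derivative (\<lambda>w. frechet_derivative F (at w) v) (at (z + \<sigma>' *\<^sub>R v + \<tau>' *\<^sub>R u)) u"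
    using A B[unfolded swap] by linarith
  with r have "frechet_derivative (\<lambda>w. frechet_derivative F (at w) u) (at (z + \<sigma> *\<^sub>R u + \<tau> *\<^sub>R v)) v
      = frechet_derivative (\<lambda>w. frechet_derivative F (at w) v) (at (z + \<sigma>' *\<^sub>R v + \<tau>' *\<^sub>R u)) u"
    by simp
  moreover have "dist (z + \<sigma> *\<^sub>R u + \<tau> *\<^sub>R v) z < d" "dist (z + \<sigma>' *\<^sub>R v + \<tau>' *\<^sub>R u) z < d"
    using near[of \<sigma> \<tau>] near[of \<tau>' \<sigma>'] \<sigma>\<tau> \<sigma>\<tau>' by (auto simp: dist_commute add_ac)
  ultimately show ?thesis using that by blast
qed

lemma frechet_derivative_symmetric:
  fixes F :: "'a::real_normed_vector \<Rightarrow> real"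
  assumes S: "open S" "z \<in> S"
    and dF: "\<And>w. w \<in> S \<Longrightarrow> F differentiable (at w)"
    and dFu: "\<And>w. w \<in> S \<Longrightarrow> (\<lambda>w. frechet_derivative F (at w) u) differentiable (at w)"
    and dFv: "\<And>w. w \<in> S \<Longrightarrow> (\<lambda>w. frechet_derivative F (at w) v) differentiable (at w)"
    and cA: "isCont (\<lambda>w. frechet_derivative (\<lambda>w. frechet_derivative F (at w) u) (at w) v) z"
    and cB: "isCont (\<lambda>w. frechet_derivative (\<lambda>w. frechet_derivative F (at w) v) (at w) u) z"
  shows "frechet_derivative (\<lambda>w. frechet_derivative F (at w) u) (at z) v
       = frechet_derivative (\<lambda>w. frechet_derivative F (at w) v) (at z) u"
proof -
  define A where "A = (\<lambda>w. frechet_derivative (\<lambda>w. frechet_derivative F (at w) u) (at w) v)"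
  define B where "B = (\<lambda>w. frechet_derivative (\<lambda>w. frechet_derivative F (at w) v) (at w) u)"
  have close: "\<bar>A z - B z\<bar> < 2 * e" if e: "e > 0" for e
  proof -
    have "eventually (\<lambda>w. w \<in> S \<and> dist (A w) (A z) < e \<and> dist (B w) (B z) < e) (nhds z)"
      using eventually_nhds_in_open[OF S]
        tendstoD[OF cA[unfolded isCont_def, THEN tendsto_at_iff_tendsto_nhds[THEN iffD1]] e]
        tendstoD[OF cB[unfolded isCont_def, THEN tendsto_at_iff_tendsto_nhds[THEN iffD1]] e]
      unfolding A_def B_def by (intro eventually_conj)
    then obtain d where d: "d > 0"
      and near: "\<And>w. dist w z < d \<Longrightarrow> w \<in> S \<and> dist (A w) (A z) < e \<and> dist (B w) (B z) < e"
      unfolding eventually_nhds_metric by blast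
    have "ball z d \<subseteq> S" using near by (auto simp: dist_commute)
    from mixed_partials_meet_near[OF d this dF dFu dFv]
    obtain p q where "dist p z < d" "dist q z < d" "A p = B q"
      unfolding A_def B_def by blast
    with near[of p] near[of q] show ?thesis unfolding dist_real_def by auto
  qed
  show ?thesis
  proof (rule ccontr)
    assume "\<not> ?thesis"
    then have "\<bar>A z - B z\<bar> / 2 > 0" unfolding A_def B_def by simp
    from close[OF this] show False by simp
  qed
qed

section \<open>Smooth functions\<close>

lemma Ck_SucD: "Ck (Suc k) S F \<Longrightarrow> Ck k S (\<lambda>z. frechet_derivative F (at z) v)"
  by (cases v) simp

lemma Ck_SucI:
  "F differentiable_on S \<Longrightarrow> (\<And>v. Ck k S (\<lambda>z. frechet_derivative F (at z) v)) \<Longrightarrow> Ck (Suc k) S F"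
  by simp

lemma Ck_Suc_imp_differentiable_at: "open S \<Longrightarrow> Ck (Suc k) S F \<Longrightarrow> w \<in> S \<Longrightarrow> F differentiable (at w)"
  using differentiable_on_eq_differentiable_at by auto

lemma Ck_cong:
  assumes "open S" "\<And>w. w \<in> S \<Longrightarrow> F w = G w" "Ck k S F"
  shows "Ck k S G"
  using assms(2,3)
proof (induction k arbitrary: F G)
  case 0
  then show ?case using continuous_on_cong[OF refl, of S F G] by simp
next
  case (Suc k)
  have "G differentiable (at w)" if w: "w \<in> S" for w
  proof -
    obtain F' where "(F has_derivative F') (at w)"
      using Ck_Suc_imp_differentiable_at[OF assms(1) Suc.prems(2) w] unfolding differentiable_def by blast
    then have "(G has_derivative F') (at w)"
      by (rule has_derivative_transform_within_open[OF _ assms(1) w Suc.prems(1)])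
    then show ?thesis unfolding differentiable_def by blast
  qed
  then have "G differentiable_on S"
    using differentiable_on_eq_differentiable_at[OF assms(1)] by blast
  moreover have "Ck k S (\<lambda>z. frechet_derivative G (at z) v)" for v
  proof (rule Suc.IH[OF _ Ck_SucD[OF Suc.prems(2)]])
    show "frechet_derivative F (at w) v = frechet_derivative G (at w) v" if "w \<in> S" for w
      by (rule fun_cong[OF frechet_derivative_cong_open[OF assms(1) that Suc.prems(1)]])
  qed
  ultimately show ?case by (intro Ck_SucI)
qed

lemma Ck_Suc_imp_Ck: "Ck (Suc k) S F \<Longrightarrow> Ck k S F"
proof (induction k arbitrary: F)
  case 0
  then show ?case by (simp add: differentiable_imp_continuous_on)
next
  case (Suc k)
  show ?case
    by (rule Ck_SucI[OF _ Suc.IH[OF Ck_SucD[OF Suc.prems]]]) (use Suc.prems in simp)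
qed

lemma Ck_const: "Ck k S (\<lambda>z. c)"
  by (induction k arbitrary: c) simp_all

lemma Ck_bounded_linear:
  assumes "bounded_linear l" shows "Ck k S l"
proof (cases k)
  case 0
  then show ?thesis using assms by (simp add: linear_continuous_on)
next
  case (Suc m)
  have "frechet_derivative l (at z) = l" for z
    using frechet_derivative_at[OF bounded_linear_imp_has_derivative[OF assms]] by simp
  then show ?thesis
    using Suc bounded_linear_imp_differentiable_on[OF assms] by (simp add: Ck_const)
qed

lemma Ck_add:
  assumes "open S"
  shows "Ck k S F \<Longrightarrow> Ck k S G \<Longrightarrow> Ck k S (\<lambda>z. F z + G z)"
proof (induction k arbitrary: F G)
  case 0
  then show ?case by (simp add: continuous_on_add)
next
  case (Suc k)
  have "Ck k S (\<lambda>z. frechet_derivative (\<lambda>z. F z + G z) (at z) v)" for v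
  proof (rule Ck_cong[OF assms])
    show "Ck k S (\<lambda>z. frechet_derivative F (at z) v + frechet_derivative G (at z) v)"
      by (intro Suc.IH Ck_SucD[OF Suc.prems(1)] Ck_SucD[OF Suc.prems(2)])
  qed (simp add: frechet_derivative_add Ck_Suc_imp_differentiable_at[OF assms Suc.prems(1)]
      Ck_Suc_imp_differentiable_at[OF assms Suc.prems(2)])
  then show ?case using Suc.prems by (intro Ck_SucI differentiable_on_add) simp_all
qed

lemma Ck_mult:
  assumes "open S"
  shows "Ck k S F \<Longrightarrow> Ck k S G \<Longrightarrow> Ck k S (\<lambda>z. F z * G z :: real)"
proof (induction k arbitrary: F G)
  case 0
  then show ?case by (simp add: continuous_on_mult)
next
  case (Suc k)
  have "Ck k S (\<lambda>z. frechet_derivative (\<lambda>z. F z * G z) (at z) v)" for v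
  proof (rule Ck_cong[OF assms])
    show "Ck k S (\<lambda>z. frechet_derivative F (at z) v * G z + F z * frechet_derivative G (at z) v)"
      by (intro Ck_add[OF assms] Suc.IH Ck_SucD[OF Suc.prems(1)] Ck_SucD[OF Suc.prems(2)]
          Ck_Suc_imp_Ck[OF Suc.prems(1)] Ck_Suc_imp_Ck[OF Suc.prems(2)])
  qed (simp add: frechet_derivative_mult Ck_Suc_imp_differentiable_at[OF assms Suc.prems(1)]
      Ck_Suc_imp_differentiable_at[OF assms Suc.prems(2)])
  then show ?case using Suc.prems by (intro Ck_SucI differentiable_on_mult) simp_all
qed

lemma Ck_inverse:
  assumes "open S"
  shows "Ck k S F \<Longrightarrow> (\<And>w. w \<in> S \<Longrightarrow> F w \<noteq> 0) \<Longrightarrow> Ck k S (\<lambda>z. inverse (F z) :: real)"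
proof (induction k arbitrary: F)
  case 0
  then show ?case by (simp add: continuous_on_inverse)
next
  case (Suc k)
  have d: "F differentiable (at w)" if "w \<in> S" for w
    by (rule Ck_Suc_imp_differentiable_at[OF assms Suc.prems(1) that])
  have "(\<lambda>z. inverse (F z)) differentiable_on S"
    using d Suc.prems(2) differentiable_inverse differentiable_on_eq_differentiable_at[OF assms] by blast
  moreover have "Ck k S (\<lambda>z. frechet_derivative (\<lambda>z. inverse (F z)) (at z) v)" for v
  proof (rule Ck_cong[OF assms])
    have "Ck k S (\<lambda>z. inverse (F z))" by (rule Suc.IH[OF Ck_Suc_imp_Ck[OF Suc.prems(1)] Suc.prems(2)])
    then show "Ck k S (\<lambda>z. (- 1) * (inverse (F z) * (frechet_derivative F (at z) v * inverse (F z))))"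
      by (intro Ck_mult[OF assms] Ck_const Ck_SucD[OF Suc.prems(1)])
    fix w assume w: "w \<in> S"
    show "(- 1) * (inverse (F w) * (frechet_derivative F (at w) v * inverse (F w)))
        = frechet_derivative (\<lambda>z. inverse (F z)) (at w) v"
      using frechet_derivative_apply[OF Deriv.has_derivative_inverse[OF Suc.prems(2)[OF w] has_frechet_derivative[OF d[OF w]]]]
      by simp
  qed
  ultimately show ?case by (intro Ck_SucI)
qed

lemma smooth_onI: "(\<And>k. Ck k S F) \<Longrightarrow> smooth_on S F"
  by (simp add: smooth_on_def)

lemma smooth_onD: "smooth_on S F \<Longrightarrow> Ck k S F"
  by (simp add: smooth_on_def)

lemma smooth_on_const: "smooth_on S (\<lambda>z. c)"
  by (intro smooth_onI Ck_const)

lemma smooth_on_bounded_linear: "bounded_linear l \<Longrightarrow> smooth_on S l"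
  by (intro smooth_onI Ck_bounded_linear)

lemma smooth_on_cong:
  assumes "open S" "\<And>w. w \<in> S \<Longrightarrow> F w = G w" "smooth_on S F"
  shows "smooth_on S G"
  using Ck_cong[OF assms(1,2) smooth_onD[OF assms(3)]] by (rule smooth_onI)

lemma smooth_on_add: "open S \<Longrightarrow> smooth_on S F \<Longrightarrow> smooth_on S G \<Longrightarrow> smooth_on S (\<lambda>z. F z + G z)"
  by (intro smooth_onI Ck_add) (auto dest: smooth_onD)

lemma smooth_on_mult: "open S \<Longrightarrow> smooth_on S F \<Longrightarrow> smooth_on S G \<Longrightarrow> smooth_on S (\<lambda>z. F z * G z)"
  by (intro smooth_onI Ck_mult) (auto dest: smooth_onD)

lemma smooth_on_inverse:
  "open S \<Longrightarrow> smooth_on S F \<Longrightarrow> (\<And>w. w \<in> S \<Longrightarrow> F w \<noteq> 0) \<Longrightarrow> smooth_on S (\<lambda>z. inverse (F z))"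
  by (intro smooth_onI Ck_inverse) (auto dest: smooth_onD)

lemma smooth_on_cmult: "open S \<Longrightarrow> smooth_on S F \<Longrightarrow> smooth_on S (\<lambda>z. c * F z)"
  by (rule smooth_on_mult[OF _ smooth_on_const])

lemma smooth_on_diff: "open S \<Longrightarrow> smooth_on S F \<Longrightarrow> smooth_on S G \<Longrightarrow> smooth_on S (\<lambda>z. F z - G z)"
  using smooth_on_add[OF _ _ smooth_on_cmult[of S G "-1"], of F] by simp

lemma smooth_on_divide_const: "open S \<Longrightarrow> smooth_on S F \<Longrightarrow> smooth_on S (\<lambda>z. F z / c)"
  using smooth_on_cmult[of S F "1/c"] by simp

lemma smooth_on_divide:
  "open S \<Longrightarrow> smooth_on S F \<Longrightarrow> smooth_on S G \<Longrightarrow> (\<And>w. w \<in> S \<Longrightarrow> G w \<noteq> 0) \<Longrightarrow>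
   smooth_on S (\<lambda>z. F z / G z)"
  using smooth_on_mult[OF _ _ smooth_on_inverse, of S F G] by (simp add: divide_inverse)

lemma smooth_on_sum:
  assumes "open S" "finite I" "\<And>i. i \<in> I \<Longrightarrow> smooth_on S (F i)"
  shows "smooth_on S (\<lambda>z. \<Sum>i\<in>I. F i z)"
  using assms(2,3) by (induction I rule: finite_induct) (simp_all add: smooth_on_const smooth_on_add[OF assms(1)])

lemma smooth_on_prod:
  assumes "open S" "finite I" "\<And>i. i \<in> I \<Longrightarrow> smooth_on S (F i)"
  shows "smooth_on S (\<lambda>z. \<Prod>i\<in>I. F i z)"
  using assms(2,3) by (induction I rule: finite_induct) (simp_all add: smooth_on_const smooth_on_mult[OF assms(1)])

lemma smooth_on_if_const: "smooth_on S F \<Longrightarrow> smooth_on S (\<lambda>w. if c then k else F w)"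
  by (cases c) (simp_all add: smooth_on_const)

lemma smooth_on_frechet_derivative: "smooth_on S F \<Longrightarrow> smooth_on S (\<lambda>z. frechet_derivative F (at z) v)"
  by (intro smooth_onI) (rule Ck_SucD, rule smooth_onD)

lemma smooth_on_imp_differentiable: "open S \<Longrightarrow> smooth_on S F \<Longrightarrow> z \<in> S \<Longrightarrow> F differentiable (at z)"
  by (rule Ck_Suc_imp_differentiable_at[OF _ smooth_onD[of S F "Suc 0"]])

lemma smooth_on_imp_isCont: "open S \<Longrightarrow> smooth_on S F \<Longrightarrow> z \<in> S \<Longrightarrow> isCont F z"
  using smooth_onD[of S F 0] continuous_on_eq_continuous_at by fastforce

lemma smooth_on_frechet_derivative_symmetric:
  assumes "open S" "smooth_on S F" "z \<in> S"
  shows "frechet_derivative (\<lambda>w. frechet_derivative F (at w) u) (at z) v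
       = frechet_derivative (\<lambda>w. frechet_derivative F (at w) v) (at z) u"
  by (rule frechet_derivative_symmetric[OF assms(1,3)])
    (auto intro!: smooth_on_imp_differentiable[OF assms(1)] smooth_on_imp_isCont[OF assms(1)]
       smooth_on_frechet_derivative assms(2,3))


section \<open>Inverse matrices\<close>

lemma matrix_inv_det_nz:
  fixes A :: "real^'n^'n"
  assumes "det A \<noteq> 0"
  shows "A ** matrix_inv A = mat 1" "matrix_inv A ** A = mat 1"
proof -
  have "\<exists>A'. A ** A' = mat 1 \<and> A' ** A = mat 1"
    using assms invertible_det_nz unfolding invertible_def by blast
  then have "A ** matrix_inv A = mat 1 \<and> matrix_inv A ** A = mat 1"
    unfolding matrix_inv_def by (rule someI_ex)
  then show "A ** matrix_inv A = mat 1" "matrix_inv A ** A = mat 1" by auto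
qed

lemma matrix_inv_cramer:
  fixes A :: "real^'n^'n"
  assumes "det A \<noteq> 0"
  shows "matrix_inv A $ a $ b = det (\<chi> i j. if j = a then axis b 1 $ i else A $ i $ j) / det A"
proof -
  have "A *v (matrix_inv A *v axis b 1) = axis b 1"
    using matrix_inv_det_nz(1)[OF assms] by (simp add: matrix_vector_mul_assoc)
  then have "(matrix_inv A *v axis b 1) $ a = det (\<chi> i j. if j = a then axis b 1 $ i else A $ i $ j) / det A"
    using cramer[OF assms] by auto
  moreover have "(matrix_inv A *v axis b 1) $ a = matrix_inv A $ a $ b"
    by (simp add: matrix_vector_mult_def axis_def if_distrib cong: if_cong)
  ultimately show ?thesis by simp
qed

lemma matrix_inv_symmetric:
  fixes A :: "real^'n^'n"
  assumes "det A \<noteq> 0" "transpose A = A"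
  shows "transpose (matrix_inv A) = matrix_inv A"
proof -
  let ?M = "matrix_inv A"
  have "transpose ?M ** A = transpose (transpose A ** ?M)"
    by (simp add: matrix_transpose_mul)
  also have "\<dots> = mat 1" using matrix_inv_det_nz[OF assms(1)] assms(2) by simp
  finally have "transpose ?M ** A = mat 1" .
  then have "transpose ?M = transpose ?M ** (A ** ?M)"
    using matrix_inv_det_nz(1)[OF assms(1)] by simp
  also have "\<dots> = ?M" using \<open>transpose ?M ** A = mat 1\<close> by (simp add: matrix_mul_assoc)
  finally show ?thesis .
qed


section \<open>A Finsler Lagrangian on a chart\<close>

named_theorems smooth_intros

locale finsler_chart =
  fixes U :: "(real^'n::finite) set" and L :: "'n pt \<Rightarrow> real"
  assumes U_open: "open U"
    and L_smooth: "smooth_on (U \<times> (UNIV - {0})) L"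
    and L_hom: "\<And>x y t. x \<in> U \<Longrightarrow> y \<noteq> 0 \<Longrightarrow> t > 0 \<Longrightarrow> L (x, t *\<^sub>R y) = t\<^sup>2 * L (x, y)"
    and L_nondeg: "\<And>z. z \<in> U \<times> (UNIV - {0}) \<Longrightarrow> det (gmat L z) \<noteq> 0"
begin

abbreviation "E \<equiv> U \<times> (UNIV - {0::real^'n})"
abbreviation "smooth F \<equiv> smooth_on E F"

lemma open_E: "open E"
  using U_open by (intro open_Times open_Diff) auto

lemma differentiable_at_E: "smooth F \<Longrightarrow> w \<in> E \<Longrightarrow> F differentiable (at w)"
  by (rule smooth_on_imp_differentiable[OF open_E])

lemmas [smooth_intros] = smooth_on_add[OF open_E] smooth_on_diff[OF open_E] smooth_on_mult[OF open_E]
  smooth_on_cmult[OF open_E] smooth_on_divide_const[OF open_E] smooth_on_const L_smooth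

lemma smooth_sum [smooth_intros]: "(\<And>i. smooth (F i)) \<Longrightarrow> smooth (\<lambda>z. \<Sum>i\<in>(UNIV::'n set). F i z)"
  by (rule smooth_on_sum[OF open_E finite])

lemma smooth_px [smooth_intros]: "smooth F \<Longrightarrow> smooth (px \<mu> F)"
  unfolding px_def by (rule smooth_on_frechet_derivative)

lemma smooth_py [smooth_intros]: "smooth F \<Longrightarrow> smooth (py \<mu> F)"
  unfolding py_def by (rule smooth_on_frechet_derivative)

lemma smooth_snd_nth [smooth_intros]: "smooth (\<lambda>w. snd w $ i)"
  by (intro smooth_on_bounded_linear bounded_linear_compose[OF bounded_linear_vec_nth] bounded_linear_snd)

lemma glow_eq_py_py: "(\<lambda>w. glow L w a b) = py a (py b L)"
  by (auto simp: glow_def gmat_def)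

lemma smooth_glow [smooth_intros]: "smooth (\<lambda>w. glow L w a b)"
  unfolding glow_eq_py_py by (intro smooth_py L_smooth)

lemma smooth_det_gmat: "smooth (\<lambda>w. det (gmat L w))"
  unfolding det_def using smooth_glow unfolding glow_def
  by (intro smooth_on_sum[OF open_E] smooth_on_prod[OF open_E] smooth_on_mult[OF open_E] smooth_on_const)
    simp_all

text \<open>Cramer's rule exhibits each entry of the inverse as a quotient of polynomials in the g_{ab}.\<close>

lemma smooth_gup [smooth_intros]: "smooth (\<lambda>w. gup L w a b)"
proof (rule smooth_on_cong[OF open_E])
  have "smooth (\<lambda>w. det (\<chi> i j. if j = a then axis b 1 $ i else gmat L w $ i $ j))"
    unfolding det_def using smooth_glow unfolding glow_def
    by (intro smooth_on_sum[OF open_E] smooth_on_prod[OF open_E] smooth_on_mult[OF open_E]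
        smooth_on_const) (simp_all add: smooth_on_if_const)
  then show "smooth (\<lambda>w. det (\<chi> i j. if j = a then axis b 1 $ i else gmat L w $ i $ j) / det (gmat L w))"
    by (rule smooth_on_divide[OF open_E _ smooth_det_gmat L_nondeg])
  show "det (\<chi> i j. if j = a then axis b 1 $ i else gmat L w $ i $ j) / det (gmat L w) = gup L w a b"
    if "w \<in> E" for w
    using matrix_inv_cramer[OF L_nondeg[OF that]] unfolding gup_def by simp
qed

lemma smooth_Gspray [smooth_intros]: "smooth (\<lambda>w. Gspray L w \<alpha>)"
  unfolding Gspray_def by (intro smooth_intros)

lemma Nconn_eq_py: "(\<lambda>w. Nconn L w \<alpha> \<mu>) = py \<mu> (\<lambda>w. Gspray L w \<alpha>)"
  by (auto simp: Nconn_def)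

lemma Berwald_eq_py: "(\<lambda>w. Berwald L w \<alpha> \<mu> \<nu>) = py \<nu> (\<lambda>w. Nconn L w \<alpha> \<mu>)"
  by (auto simp: Berwald_def)

lemma smooth_Nconn [smooth_intros]: "smooth (\<lambda>w. Nconn L w \<alpha> \<mu>)"
  unfolding Nconn_eq_py by (intro smooth_py smooth_Gspray)

lemma smooth_Berwald [smooth_intros]: "smooth (\<lambda>w. Berwald L w \<alpha> \<mu> \<nu>)"
  unfolding Berwald_eq_py by (intro smooth_py smooth_Nconn)

lemma dlt_eq: "dlt L \<mu> F = (\<lambda>z. px \<mu> F z - (\<Sum>\<nu>\<in>UNIV. Nconn L z \<nu> \<mu> * py \<nu> F z))"
  by (auto simp: dlt_def)

lemma smooth_dlt [smooth_intros]: "smooth F \<Longrightarrow> smooth (dlt L \<mu> F)"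
  unfolding dlt_eq by (intro smooth_intros)


lemma py_add: "smooth F \<Longrightarrow> smooth G \<Longrightarrow> w \<in> E \<Longrightarrow> py m (\<lambda>w. F w + G w) w = py m F w + py m G w"
  unfolding py_def by (intro frechet_derivative_add differentiable_at_E)

lemma py_diff: "smooth F \<Longrightarrow> smooth G \<Longrightarrow> w \<in> E \<Longrightarrow> py m (\<lambda>w. F w - G w) w = py m F w - py m G w"
  unfolding py_def by (intro frechet_derivative_diff differentiable_at_E)

lemma py_mult: "smooth F \<Longrightarrow> smooth G \<Longrightarrow> w \<in> E \<Longrightarrow> py m (\<lambda>w. F w * G w) w = py m F w * G w + F w * py m G w"
  unfolding py_def by (intro frechet_derivative_mult differentiable_at_E)

lemma py_sum:
  "(\<And>i. smooth (F i)) \<Longrightarrow> w \<in> E \<Longrightarrow> py m (\<lambda>w. \<Sum>i\<in>(UNIV::'n set). F i w) w = (\<Sum>i\<in>UNIV. py m (F i) w)"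
  unfolding py_def by (intro frechet_derivative_sum finite differentiable_at_E)

lemma py_cmult: "smooth F \<Longrightarrow> w \<in> E \<Longrightarrow> py m (\<lambda>w. c * F w) w = c * py m F w"
  unfolding py_def by (intro frechet_derivative_cmult differentiable_at_E)

lemma py_const: "py m (\<lambda>w. c) w = 0"
  unfolding py_def by simp

lemma py_divide: "smooth F \<Longrightarrow> w \<in> E \<Longrightarrow> py m (\<lambda>w. F w / c) w = py m F w / c"
  using py_cmult[of F w m "1/c"] by simp

lemma px_add: "smooth F \<Longrightarrow> smooth G \<Longrightarrow> w \<in> E \<Longrightarrow> px m (\<lambda>w. F w + G w) w = px m F w + px m G w"
  unfolding px_def by (intro frechet_derivative_add differentiable_at_E)

lemma px_mult: "smooth F \<Longrightarrow> smooth G \<Longrightarrow> w \<in> E \<Longrightarrow> px m (\<lambda>w. F w * G w) w = px m F w * G w + F w * px m G w"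
  unfolding px_def by (intro frechet_derivative_mult differentiable_at_E)

lemma px_sum:
  "(\<And>i. smooth (F i)) \<Longrightarrow> w \<in> E \<Longrightarrow> px m (\<lambda>w. \<Sum>i\<in>(UNIV::'n set). F i w) w = (\<Sum>i\<in>UNIV. px m (F i) w)"
  unfolding px_def by (intro frechet_derivative_sum finite differentiable_at_E)

lemma px_cmult: "smooth F \<Longrightarrow> w \<in> E \<Longrightarrow> px m (\<lambda>w. c * F w) w = c * px m F w"
  unfolding px_def by (intro frechet_derivative_cmult differentiable_at_E)

lemma px_const: "px m (\<lambda>w. c) w = 0"
  unfolding px_def by simp

lemma frechet_derivative_snd_nth: "frechet_derivative (\<lambda>w::'n pt. snd w $ i) (at w) v = snd v $ i"
  by (intro frechet_derivative_apply bounded_linear_imp_has_derivative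
      bounded_linear_compose[OF bounded_linear_vec_nth] bounded_linear_snd)

lemma py_snd_nth: "py m (\<lambda>w::'n pt. snd w $ i) w = (if i = m then 1 else 0)"
  unfolding py_def by (subst frechet_derivative_snd_nth) (simp add: axis_def)

lemma px_snd_nth: "px m (\<lambda>w::'n pt. snd w $ i) w = 0"
  unfolding px_def by (subst frechet_derivative_snd_nth) simp

lemmas partial_rules = py_add py_diff py_mult py_sum py_cmult py_const py_divide py_snd_nth
  px_add px_mult px_sum px_cmult px_const px_snd_nth

lemma py_cong: "w \<in> E \<Longrightarrow> (\<And>w. w \<in> E \<Longrightarrow> F w = G w) \<Longrightarrow> py m F w = py m G w"
  unfolding py_def by (rule fun_cong[OF frechet_derivative_cong_open[OF open_E]])

lemma px_cong: "w \<in> E \<Longrightarrow> (\<And>w. w \<in> E \<Longrightarrow> F w = G w) \<Longrightarrow> px m F w = px m G w"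
  unfolding px_def by (rule fun_cong[OF frechet_derivative_cong_open[OF open_E]])

lemma dlt_cong: "w \<in> E \<Longrightarrow> (\<And>w. w \<in> E \<Longrightarrow> F w = G w) \<Longrightarrow> dlt L m F w = dlt L m G w"
  unfolding dlt_def by (simp add: px_cong[of w F G] py_cong[of w F G])

lemma py_py_commute: "smooth F \<Longrightarrow> w \<in> E \<Longrightarrow> py a (py b F) w = py b (py a F) w"
  unfolding py_def by (rule smooth_on_frechet_derivative_symmetric[OF open_E])

lemma px_py_commute: "smooth F \<Longrightarrow> w \<in> E \<Longrightarrow> px a (py b F) w = py b (px a F) w"
  unfolding py_def px_def by (rule smooth_on_frechet_derivative_symmetric[OF open_E])

lemma glow_sym: "w \<in> E \<Longrightarrow> glow L w a b = glow L w b a"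
  unfolding glow_def gmat_def using py_py_commute[OF L_smooth] by simp

lemma Berwald_sym: "w \<in> E \<Longrightarrow> Berwald L w j a b = Berwald L w j b a"
  unfolding Berwald_def Nconn_eq_py by (rule py_py_commute[OF smooth_Gspray])

lemma py_py_L: "py a (py b L) w = glow L w a b"
  by (simp add: glow_def gmat_def)

lemma py_Gspray: "py k (\<lambda>w. Gspray L w j) w = Nconn L w j k"
  by (simp add: Nconn_def)

lemma py_Nconn: "py k (\<lambda>w. Nconn L w j m) w = Berwald L w j m k"
  by (simp add: Berwald_def)

text \<open>\<open>dlt L \<mu>\<close> is the derivative along the horizontal lift of the \<open>\<mu>\<close>-th coordinate vector.\<close>

definition horizontal :: "'n pt \<Rightarrow> 'n \<Rightarrow> 'n pt" where
  "horizontal w \<mu> = (axis \<mu> 1, 0) - (\<Sum>\<nu>\<in>UNIV. Nconn L w \<nu> \<mu> *\<^sub>R (0, axis \<nu> 1))"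

lemma dlt_eq_frechet_derivative:
  assumes "smooth F" "w \<in> E"
  shows "dlt L \<mu> F w = frechet_derivative F (at w) (horizontal w \<mu>)"
proof -
  have lin: "linear (frechet_derivative F (at w))"
    by (rule linear_frechet_derivative[OF differentiable_at_E[OF assms]])
  have "frechet_derivative F (at w) (horizontal w \<mu>) = frechet_derivative F (at w) (axis \<mu> 1, 0)
      - (\<Sum>\<nu>\<in>UNIV. Nconn L w \<nu> \<mu> * frechet_derivative F (at w) (0, axis \<nu> 1))"
    unfolding horizontal_def by (simp only: linear_diff[OF lin] linear_sum[OF lin] linear_scale[OF lin] real_scaleR_def)
  then show ?thesis unfolding dlt_def px_def py_def by simp
qed

lemma dlt_mult:
  "smooth F \<Longrightarrow> smooth G \<Longrightarrow> w \<in> E \<Longrightarrow> dlt L m (\<lambda>w. F w * G w) w = dlt L m F w * G w + F w * dlt L m G w"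
  by (simp add: dlt_eq_frechet_derivative smooth_on_mult[OF open_E] frechet_derivative_mult differentiable_at_E)

lemma dlt_sum:
  "(\<And>i. smooth (F i)) \<Longrightarrow> w \<in> E \<Longrightarrow>
   dlt L m (\<lambda>w. \<Sum>i\<in>(UNIV::'n set). F i w) w = (\<Sum>i\<in>UNIV. dlt L m (F i) w)"
  by (simp add: dlt_eq_frechet_derivative smooth_sum frechet_derivative_sum differentiable_at_E)


lemma gup_glow: "w \<in> E \<Longrightarrow> (\<Sum>b\<in>UNIV. gup L w a b * glow L w b c) = (if a = c then 1 else 0)"
  using matrix_inv_det_nz(2)[OF L_nondeg, of w]
  unfolding gup_def glow_def by (auto simp: vec_eq_iff matrix_matrix_mult_def mat_def)

lemma glow_gup: "w \<in> E \<Longrightarrow> (\<Sum>b\<in>UNIV. glow L w a b * gup L w b c) = (if a = c then 1 else 0)"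
  using matrix_inv_det_nz(1)[OF L_nondeg, of w]
  unfolding gup_def glow_def by (auto simp: vec_eq_iff matrix_matrix_mult_def mat_def)

lemma gup_sym: assumes "w \<in> E" shows "gup L w a b = gup L w b a"
proof -
  have "transpose (gmat L w) = gmat L w"
    using glow_sym[OF assms] by (auto simp: vec_eq_iff transpose_def glow_def)
  from matrix_inv_symmetric[OF L_nondeg[OF assms] this] show ?thesis
    unfolding gup_def by (auto simp: vec_eq_iff transpose_def)
qed

lemma gup_glow_contract:
  assumes "w \<in> E"
  shows "(\<Sum>b\<in>UNIV. gup L w a b * (\<Sum>r\<in>UNIV. glow L w b r * T r)) = T a"
proof -
  have "(\<Sum>b\<in>UNIV. gup L w a b * (\<Sum>r\<in>UNIV. glow L w b r * T r))
      = (\<Sum>b\<in>UNIV. \<Sum>r\<in>UNIV. gup L w a b * glow L w b r * T r)"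
    by (simp add: sum_distrib_left mult.assoc)
  also have "\<dots> = (\<Sum>r\<in>UNIV. (\<Sum>b\<in>UNIV. gup L w a b * glow L w b r) * T r)"
    by (subst sum.swap) (simp add: sum_distrib_right)
  also have "\<dots> = T a" using gup_glow[OF assms] by simp
  finally show ?thesis .
qed

lemma glow_gup_contract:
  assumes "w \<in> E"
  shows "(\<Sum>b\<in>UNIV. glow L w a b * (\<Sum>r\<in>UNIV. gup L w b r * T r)) = T a"
proof -
  have "(\<Sum>b\<in>UNIV. glow L w a b * (\<Sum>r\<in>UNIV. gup L w b r * T r))
      = (\<Sum>b\<in>UNIV. \<Sum>r\<in>UNIV. glow L w a b * gup L w b r * T r)"
    by (simp add: sum_distrib_left mult.assoc)
  also have "\<dots> = (\<Sum>r\<in>UNIV. (\<Sum>b\<in>UNIV. glow L w a b * gup L w b r) * T r)"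
    by (subst sum.swap) (simp add: sum_distrib_right)
  also have "\<dots> = T a" using glow_gup[OF assms] by simp
  finally show ?thesis .
qed

lemma frechet_derivative_gup:
  assumes w: "w \<in> E"
  shows "frechet_derivative (\<lambda>w. gup L w a e) (at w) v =
     - (\<Sum>b\<in>UNIV. \<Sum>c\<in>UNIV. gup L w a b * frechet_derivative (\<lambda>w. glow L w b c) (at w) v * gup L w c e)"
proof -
  let ?Dh = "\<lambda>b. frechet_derivative (\<lambda>w. gup L w a b) (at w) v"
  let ?Dg = "\<lambda>b c. frechet_derivative (\<lambda>w. glow L w b c) (at w) v"
  have "(\<Sum>b\<in>UNIV. ?Dh b * glow L w b c) = - (\<Sum>b\<in>UNIV. gup L w a b * ?Dg b c)" for c
  proof -
    have "frechet_derivative (\<lambda>w. \<Sum>b\<in>UNIV. gup L w a b * glow L w b c) (at w) v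
        = frechet_derivative (\<lambda>w. if a = c then 1 else 0) (at w) v"
      by (rule fun_cong[OF frechet_derivative_cong_open[OF open_E w gup_glow]])
    then have "(\<Sum>b\<in>UNIV. ?Dh b * glow L w b c + gup L w a b * ?Dg b c) = 0"
      using w by (simp add: frechet_derivative_sum frechet_derivative_mult differentiable_at_E smooth_intros)
    then show ?thesis by (simp add: sum.distrib eq_neg_iff_add_eq_0)
  qed
  then have "(\<Sum>c\<in>UNIV. (\<Sum>b\<in>UNIV. ?Dh b * glow L w b c) * gup L w c e)
      = - (\<Sum>c\<in>UNIV. \<Sum>b\<in>UNIV. gup L w a b * ?Dg b c * gup L w c e)"
    by (simp add: sum_distrib_right sum_negf)
  moreover have "(\<Sum>c\<in>UNIV. (\<Sum>b\<in>UNIV. ?Dh b * glow L w b c) * gup L w c e) = ?Dh e"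
  proof -
    have "(\<Sum>c\<in>UNIV. (\<Sum>b\<in>UNIV. ?Dh b * glow L w b c) * gup L w c e)
        = (\<Sum>c\<in>UNIV. \<Sum>b\<in>UNIV. ?Dh b * glow L w b c * gup L w c e)"
      by (simp add: sum_distrib_right)
    also have "\<dots> = (\<Sum>b\<in>UNIV. \<Sum>c\<in>UNIV. ?Dh b * glow L w b c * gup L w c e)"
      by (rule sum.swap)
    also have "\<dots> = (\<Sum>b\<in>UNIV. ?Dh b * (\<Sum>c\<in>UNIV. glow L w b c * gup L w c e))"
      by (simp add: sum_distrib_left mult.assoc)
    finally show ?thesis by (simp add: glow_gup[OF w])
  qed
  ultimately show ?thesis by (subst sum.swap) simp
qed

lemma py_gup: "w \<in> E \<Longrightarrow> py m (\<lambda>w. gup L w a e) w =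
     - (\<Sum>b\<in>UNIV. \<Sum>c\<in>UNIV. gup L w a b * py m (\<lambda>w. glow L w b c) w * gup L w c e)"
  unfolding py_def by (rule frechet_derivative_gup)

lemma dlt_gup: "w \<in> E \<Longrightarrow> dlt L m (\<lambda>w. gup L w a e) w =
     - (\<Sum>b\<in>UNIV. \<Sum>c\<in>UNIV. gup L w a b * dlt L m (\<lambda>w. glow L w b c) w * gup L w c e)"
  by (simp add: dlt_eq_frechet_derivative smooth_gup smooth_glow frechet_derivative_gup)


subsection \<open>Homogeneity\<close>

lemma euler_py_L: assumes w: "w \<in> E" shows "(\<Sum>a\<in>UNIV. py a L w * snd w $ a) = 2 * L w"
proof -
  obtain x y where w_eq: "w = (x, y)" by (cases w)
  with w have x: "x \<in> U" and y: "y \<noteq> 0" by auto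
  have "((\<lambda>t. L ((x, 0) + t *\<^sub>R (0, y))) has_real_derivative frechet_derivative L (at w) (0, y)) (at 1)"
    using DERIV_along_line[of L "(x, 0)" 1 "(0, y)"] differentiable_at_E[OF L_smooth w] w_eq by simp
  moreover have "((\<lambda>t. L ((x, 0) + t *\<^sub>R (0, y))) has_real_derivative 2 * L w) (at 1)"
  proof (rule has_field_derivative_transform_within_open[of "\<lambda>t. t\<^sup>2 * L w" _ _ "{0<..}"])
    show "((\<lambda>t. t\<^sup>2 * L w) has_real_derivative 2 * L w) (at 1)"
      by (auto intro!: derivative_eq_intros)
    show "t\<^sup>2 * L w = L ((x, 0) + t *\<^sub>R (0, y))" if "t \<in> {0<..}" for t
      using L_hom[OF x y] that w_eq by simp
  qed simp_all
  ultimately have "frechet_derivative L (at w) (0, y) = 2 * L w"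
    by (rule DERIV_unique)
  moreover have "frechet_derivative L (at w) (0, y) = (\<Sum>a\<in>UNIV. y $ a * py a L w)"
  proof -
    have lin: "linear (frechet_derivative L (at w))"
      by (rule linear_frechet_derivative[OF differentiable_at_E[OF L_smooth w]])
    have "(0, y) = (\<Sum>a\<in>UNIV. y $ a *\<^sub>R (0::real^'n, axis a (1::real)))"
      by (simp add: prod_eq_iff fst_sum snd_sum vec_eq_sum_axis[symmetric])
    then show ?thesis unfolding py_def
      by (simp only: linear_sum[OF lin] linear_scale[OF lin] real_scaleR_def)
  qed
  ultimately show ?thesis using w_eq by (simp add: mult.commute)
qed

lemma glow_contract_y: assumes w: "w \<in> E" shows "(\<Sum>a\<in>UNIV. glow L w j a * snd w $ a) = py j L w"
proof -
  have "py j (\<lambda>w. \<Sum>a\<in>UNIV. py a L w * snd w $ a) w = py j (\<lambda>w. 2 * L w) w"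
    by (rule py_cong[OF w euler_py_L])
  then show ?thesis
    using w by (simp add: partial_rules smooth_intros py_py_L sum.distrib)
qed

lemma px_py_L_contract_y: assumes w: "w \<in> E" shows "(\<Sum>a\<in>UNIV. px m (py a L) w * snd w $ a) = 2 * px m L w"
proof -
  have "px m (\<lambda>w. \<Sum>a\<in>UNIV. py a L w * snd w $ a) w = px m (\<lambda>w. 2 * L w) w"
    by (rule px_cong[OF w euler_py_L])
  then show ?thesis using w by (simp add: partial_rules smooth_intros)
qed

lemma glow_Gspray: assumes w: "w \<in> E"
  shows "(\<Sum>j\<in>UNIV. glow L w i j * Gspray L w j) =
    (1/2) * ((\<Sum>m\<in>UNIV. px m (py i L) w * snd w $ m) - px i L w)"
proof -
  define K where "K = (\<lambda>\<delta>. (\<Sum>\<gamma>\<in>UNIV. px \<gamma> (py \<delta> L) w * (snd w $ \<gamma>)) - px \<delta> L w)"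
  have "(\<Sum>j\<in>UNIV. glow L w i j * Gspray L w j)
      = (1/2) * (\<Sum>j\<in>UNIV. glow L w i j * (\<Sum>\<delta>\<in>UNIV. gup L w j \<delta> * K \<delta>))"
    unfolding Gspray_def K_def by (simp add: sum_distrib_left mult_ac)
  also have "\<dots> = (1/2) * K i" using glow_gup_contract[OF w] by simp
  finally show ?thesis unfolding K_def .
qed

lemma Gspray_contract_py_L: assumes w: "w \<in> E"
  shows "(\<Sum>j\<in>UNIV. Gspray L w j * py j L w) = (1/2) * (\<Sum>m\<in>UNIV. px m L w * snd w $ m)"
proof -
  define y where "y = snd w"
  have "(\<Sum>j\<in>UNIV. Gspray L w j * py j L w) = (\<Sum>j\<in>UNIV. \<Sum>i\<in>UNIV. Gspray L w j * glow L w j i * y $ i)"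
    by (simp add: glow_contract_y[OF w, symmetric] sum_distrib_left mult.assoc y_def)
  also have "\<dots> = (\<Sum>i\<in>UNIV. \<Sum>j\<in>UNIV. Gspray L w j * glow L w j i * y $ i)"
    by (rule sum.swap)
  also have "\<dots> = (\<Sum>i\<in>UNIV. y $ i * (\<Sum>j\<in>UNIV. glow L w i j * Gspray L w j))"
    by (simp add: sum_distrib_left glow_sym[OF w] mult_ac)
  also have "\<dots> = (\<Sum>i\<in>UNIV. y $ i * ((1/2) * ((\<Sum>m\<in>UNIV. px m (py i L) w * y $ m) - px i L w)))"
    by (simp only: glow_Gspray[OF w] y_def)
  also have "\<dots> = (1/2) * (\<Sum>i\<in>UNIV. y $ i * (\<Sum>m\<in>UNIV. px m (py i L) w * y $ m))
      - (1/2) * (\<Sum>i\<in>UNIV. y $ i * px i L w)"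
    by (simp add: sum_distrib_left right_diff_distrib sum_subtractf mult_ac)
  also have "(\<Sum>i\<in>UNIV. y $ i * (\<Sum>m\<in>UNIV. px m (py i L) w * y $ m)) = (\<Sum>m\<in>UNIV. y $ m * (2 * px m L w))"
  proof -
    have "(\<Sum>i\<in>UNIV. y $ i * (\<Sum>m\<in>UNIV. px m (py i L) w * y $ m))
        = (\<Sum>i\<in>UNIV. \<Sum>m\<in>UNIV. y $ i * px m (py i L) w * y $ m)"
      by (simp add: sum_distrib_left mult.assoc)
    also have "\<dots> = (\<Sum>m\<in>UNIV. \<Sum>i\<in>UNIV. y $ i * px m (py i L) w * y $ m)"
      by (rule sum.swap)
    also have "\<dots> = (\<Sum>m\<in>UNIV. y $ m * (\<Sum>i\<in>UNIV. px m (py i L) w * y $ i))"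
      by (simp add: sum_distrib_left mult_ac)
    finally show ?thesis using px_py_L_contract_y[OF w] by (simp add: y_def)
  qed
  finally show ?thesis by (simp add: y_def sum_distrib_left mult_ac)
qed
lemma dlt_L_eq_0: assumes w: "w \<in> E" shows "dlt L k L w = 0"
proof -
  have "py k (\<lambda>w. \<Sum>j\<in>UNIV. Gspray L w j * py j L w) w
      = py k (\<lambda>w. (1/2) * (\<Sum>m\<in>UNIV. px m L w * snd w $ m)) w"
    by (rule py_cong[OF w Gspray_contract_py_L])
  then have "(\<Sum>j\<in>UNIV. Nconn L w j k * py j L w) + (\<Sum>j\<in>UNIV. Gspray L w j * glow L w k j)
      = (1/2) * ((\<Sum>m\<in>UNIV. py k (px m L) w * snd w $ m) + px k L w)"
    using w by (simp add: partial_rules smooth_intros py_Gspray py_py_L sum.distrib distrib_left)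
  moreover have "py k (px m L) w = px m (py k L) w" for m
    using px_py_commute[OF L_smooth w] by simp
  ultimately show ?thesis
    using glow_Gspray[OF w, of k] glow_sym[OF w] unfolding dlt_def by (simp add: mult.commute field_simps)
qed

lemma py_dlt: assumes "w \<in> E" "smooth f"
  shows "py n (dlt L m f) w
    = py n (px m f) w - (\<Sum>s\<in>UNIV. Berwald L w s m n * py s f w + Nconn L w s m * py n (py s f) w)"
  unfolding dlt_eq using assms by (simp add: partial_rules smooth_intros py_Nconn)

lemma py_px_L: assumes w: "w \<in> E"
  shows "py i (px k L) w = (\<Sum>j\<in>UNIV. Berwald L w j k i * py j L w) + (\<Sum>j\<in>UNIV. Nconn L w j k * glow L w i j)"
proof -
  have "py i (dlt L k L) w = py i (\<lambda>w. 0) w"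
    by (rule py_cong[OF w dlt_L_eq_0])
  then show ?thesis using w by (simp add: py_dlt L_smooth py_py_L py_const sum.distrib)
qed

lemma py_py_px_L: assumes w: "w \<in> E"
  shows "py l (py i (px k L)) w = (\<Sum>j\<in>UNIV. py j L w * py l (\<lambda>w. Berwald L w j k i) w)
     + (\<Sum>j\<in>UNIV. glow L w l j * Berwald L w j k i) + (\<Sum>j\<in>UNIV. glow L w i j * Berwald L w j k l)
     + (\<Sum>j\<in>UNIV. Nconn L w j k * py l (\<lambda>w. glow L w i j) w)"
proof -
  have "py l (py i (px k L)) w = py l (\<lambda>w. (\<Sum>j\<in>UNIV. Berwald L w j k i * py j L w)
      + (\<Sum>j\<in>UNIV. Nconn L w j k * glow L w i j)) w"
    by (rule py_cong[OF w py_px_L])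
  then show ?thesis
    using w by (simp add: partial_rules smooth_intros py_Nconn py_py_L sum.distrib mult_ac)
qed


subsection \<open>The Landsberg tensor is totally symmetric\<close>

text \<open>\<open>Ttensor\<close> is \<open>-2\<close> times the lowered Landsberg tensor, see \<open>Lands_eq\<close>.\<close>

definition Ttensor :: "'n pt \<Rightarrow> 'n \<Rightarrow> 'n \<Rightarrow> 'n \<Rightarrow> real" where
  "Ttensor w k i l = (\<Sum>j\<in>UNIV. py j L w * py l (\<lambda>w. Berwald L w j k i) w)"

definition Berwald_low :: "'n pt \<Rightarrow> 'n \<Rightarrow> 'n \<Rightarrow> 'n \<Rightarrow> real" where
  "Berwald_low w a b c = (\<Sum>j\<in>UNIV. glow L w a j * Berwald L w j b c)"

lemma Ttensor_sym12: assumes w: "w \<in> E" shows "Ttensor w k i l = Ttensor w i k l"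
proof -
  have "py l (\<lambda>w. Berwald L w j k i) w = py l (\<lambda>w. Berwald L w j i k) w" for j
    by (rule py_cong[OF w Berwald_sym])
  then show ?thesis unfolding Ttensor_def by simp
qed

lemma Ttensor_sym23: assumes w: "w \<in> E" shows "Ttensor w k i l = Ttensor w k l i"
proof -
  have "py l (\<lambda>w. Berwald L w j k i) w = py i (\<lambda>w. Berwald L w j k l) w" for j
    unfolding Berwald_eq_py by (rule py_py_commute[OF smooth_Nconn w])
  then show ?thesis unfolding Ttensor_def by simp
qed

lemma Berwald_low_sym: "w \<in> E \<Longrightarrow> Berwald_low w a b c = Berwald_low w a c b"
  unfolding Berwald_low_def by (simp add: Berwald_sym)

lemma px_glow: assumes w: "w \<in> E" shows "px k (\<lambda>w. glow L w i l) w = py l (py i (px k L)) w"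
proof -
  have "px k (\<lambda>w. glow L w i l) w = py i (px k (py l L)) w"
    unfolding glow_eq_py_py by (rule px_py_commute[OF smooth_py[OF L_smooth] w])
  also have "\<dots> = py i (py l (px k L)) w" by (rule py_cong[OF w px_py_commute[OF L_smooth]])
  also have "\<dots> = py l (py i (px k L)) w" by (rule py_py_commute[OF smooth_px[OF L_smooth] w])
  finally show ?thesis .
qed

lemma py_glow_sym: assumes w: "w \<in> E" shows "py j (\<lambda>w. glow L w i l) w = py l (\<lambda>w. glow L w i j) w"
proof -
  have "py j (\<lambda>w. glow L w i l) w = py i (py j (py l L)) w"
    unfolding glow_eq_py_py by (rule py_py_commute[OF smooth_py[OF L_smooth] w])
  also have "\<dots> = py i (py l (py j L)) w" by (rule py_cong[OF w py_py_commute[OF L_smooth]])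
  also have "\<dots> = py l (\<lambda>w. glow L w i j) w"
    unfolding glow_eq_py_py by (rule py_py_commute[OF smooth_py[OF L_smooth] w])
  finally show ?thesis .
qed

lemma dlt_glow: assumes w: "w \<in> E"
  shows "dlt L k (\<lambda>w. glow L w i l) w = Ttensor w k i l + Berwald_low w l k i + Berwald_low w i k l"
  unfolding dlt_def px_glow[OF w] py_glow_sym[OF w] py_py_px_L[OF w] Ttensor_def Berwald_low_def
  by (simp add: mult_ac)

lemma Gam_eq: assumes w: "w \<in> E"
  shows "Gam L w a b c = (1/2) * (\<Sum>s\<in>UNIV. gup L w a s * Ttensor w s b c) + Berwald L w a b c"
proof -
  have "dlt L b (\<lambda>w. glow L w s c) w + dlt L c (\<lambda>w. glow L w s b) w - dlt L s (\<lambda>w. glow L w b c) w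
      = Ttensor w s b c + 2 * Berwald_low w s b c" for s
    unfolding dlt_glow[OF w]
    using Ttensor_sym12[OF w, of b s c] Ttensor_sym12[OF w, of c s b] Ttensor_sym23[OF w, of s c b]
      Berwald_low_sym[OF w, of c b s] Berwald_low_sym[OF w, of b c s] Berwald_low_sym[OF w, of s c b]
    by simp
  then have "Gam L w a b c = (1/2) * (\<Sum>s\<in>UNIV. gup L w a s * (Ttensor w s b c + 2 * Berwald_low w s b c))"
    unfolding Gam_def by simp
  also have "\<dots> = (1/2) * (\<Sum>s\<in>UNIV. gup L w a s * Ttensor w s b c) + (\<Sum>s\<in>UNIV. gup L w a s * Berwald_low w s b c)"
    by (simp add: algebra_simps sum.distrib sum_distrib_left)
  also have "(\<Sum>s\<in>UNIV. gup L w a s * Berwald_low w s b c) = Berwald L w a b c"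
    unfolding Berwald_low_def using gup_glow_contract[OF w] by simp
  finally show ?thesis .
qed

lemma Lands_eq: "w \<in> E \<Longrightarrow> Lands L w a b c = - (1/2) * (\<Sum>s\<in>UNIV. gup L w a s * Ttensor w s b c)"
  unfolding Lands_def by (simp add: Gam_eq)

lemma trace_Lands_eq_Jup: assumes w: "w \<in> E"
  shows "(\<Sum>m\<in>UNIV. \<Sum>n\<in>UNIV. gup L w m n * Lands L w a n m) = Jup L w a"
proof -
  define \<Phi> where "\<Phi> = (\<lambda>p q r. gup L w a p * gup L w q r * Ttensor w p r q)"
  have "Jlow L w p = - (1/2) * (\<Sum>q\<in>UNIV. \<Sum>r\<in>UNIV. gup L w q r * Ttensor w p r q)" for p
    unfolding Jlow_def Lands_eq[OF w] sum_distrib_left[symmetric]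
    by (simp add: Ttensor_sym12[OF w, of _ p])
  then have J: "Jup L w a = - (1/2) * (\<Sum>p\<in>UNIV. \<Sum>q\<in>UNIV. \<Sum>r\<in>UNIV. \<Phi> p q r)"
    unfolding Jup_def \<Phi>_def by (simp add: sum_distrib_left mult_ac)
  have trace: "(\<Sum>m\<in>UNIV. \<Sum>n\<in>UNIV. gup L w m n * Lands L w a n m)
      = - (1/2) * (\<Sum>q\<in>UNIV. \<Sum>r\<in>UNIV. \<Sum>p\<in>UNIV. \<Phi> p q r)"
    unfolding Lands_eq[OF w] \<Phi>_def by (simp add: sum_distrib_left mult_ac)
  show ?thesis unfolding J trace by (subst sum_rotate3) (rule refl)
qed


subsection \<open>Compatibility of \<open>\<Gamma>\<close> with the metric\<close>

lemma dlt_glow_sym: "w \<in> E \<Longrightarrow> dlt L m (\<lambda>w. glow L w a b) w = dlt L m (\<lambda>w. glow L w b a) w"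
  by (rule dlt_cong) (auto intro: glow_sym)

lemma Gam_sym: "w \<in> E \<Longrightarrow> Gam L w a b c = Gam L w a c b"
  unfolding Gam_def using dlt_glow_sym by (simp add: algebra_simps)

lemma glow_Gam_contract: assumes w: "w \<in> E"
  shows "(\<Sum>r\<in>UNIV. glow L w s r * Gam L w r b c) = (1/2) *
    (dlt L b (\<lambda>w. glow L w s c) w + dlt L c (\<lambda>w. glow L w s b) w - dlt L s (\<lambda>w. glow L w b c) w)"
proof -
  define X where "X = (\<lambda>s. dlt L b (\<lambda>w. glow L w s c) w + dlt L c (\<lambda>w. glow L w s b) w
    - dlt L s (\<lambda>w. glow L w b c) w)"
  have "(\<Sum>r\<in>UNIV. glow L w s r * Gam L w r b c)
      = (1/2) * (\<Sum>r\<in>UNIV. glow L w s r * (\<Sum>q\<in>UNIV. gup L w r q * X q))"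
    unfolding Gam_def X_def by (simp add: sum_distrib_left mult_ac)
  also have "\<dots> = (1/2) * X s" using glow_gup_contract[OF w] by simp
  finally show ?thesis unfolding X_def .
qed

lemma dlt_glow_compat: assumes w: "w \<in> E"
  shows "dlt L a (\<lambda>w. glow L w b c) w =
    (\<Sum>r\<in>UNIV. glow L w b r * Gam L w r a c) + (\<Sum>r\<in>UNIV. glow L w c r * Gam L w r a b)"
  unfolding glow_Gam_contract[OF w] using dlt_glow_sym[OF w] by (simp add: algebra_simps)

lemma dlt_gup_compat: assumes w: "w \<in> E"
  shows "dlt L m (\<lambda>w. gup L w a e) w =
    - (\<Sum>c\<in>UNIV. Gam L w a m c * gup L w c e) - (\<Sum>b\<in>UNIV. gup L w a b * Gam L w e m b)"
proof -
  let ?h = "gup L w" and ?g = "glow L w" and ?G = "Gam L w"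
  have "(\<Sum>b\<in>UNIV. \<Sum>c\<in>UNIV. ?h a b * (\<Sum>r\<in>UNIV. ?g b r * ?G r m c) * ?h c e)
      = (\<Sum>c\<in>UNIV. (\<Sum>b\<in>UNIV. ?h a b * (\<Sum>r\<in>UNIV. ?g b r * ?G r m c)) * ?h c e)"
    by (subst sum.swap) (simp add: sum_distrib_right)
  also have "\<dots> = (\<Sum>c\<in>UNIV. ?G a m c * ?h c e)"
    using gup_glow_contract[OF w] by simp
  finally have first: "(\<Sum>b\<in>UNIV. \<Sum>c\<in>UNIV. ?h a b * (\<Sum>r\<in>UNIV. ?g b r * ?G r m c) * ?h c e)
      = (\<Sum>c\<in>UNIV. ?G a m c * ?h c e)" .
  have "(\<Sum>b\<in>UNIV. \<Sum>c\<in>UNIV. ?h a b * (\<Sum>r\<in>UNIV. ?g c r * ?G r m b) * ?h c e)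
      = (\<Sum>b\<in>UNIV. ?h a b * (\<Sum>c\<in>UNIV. ?h e c * (\<Sum>r\<in>UNIV. ?g c r * ?G r m b)))"
    by (simp add: sum_distrib_left gup_sym[OF w, of _ e] mult_ac)
  also have "\<dots> = (\<Sum>b\<in>UNIV. ?h a b * ?G e m b)"
    using gup_glow_contract[OF w] by simp
  finally have second: "(\<Sum>b\<in>UNIV. \<Sum>c\<in>UNIV. ?h a b * (\<Sum>r\<in>UNIV. ?g c r * ?G r m b) * ?h c e)
      = (\<Sum>b\<in>UNIV. ?h a b * ?G e m b)" .
  show ?thesis
    unfolding dlt_gup[OF w] dlt_glow_compat[OF w] first[symmetric] second[symmetric]
    by (simp add: algebra_simps sum.distrib)
qed


lemma divHC_vertical_gradient:
  assumes z: "z \<in> E" and f: "smooth f"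
  shows "divHC L (\<lambda>w \<mu>. \<Sum>\<nu>\<in>UNIV. gup L w \<mu> \<nu> * py \<nu> f w) z
       = (\<Sum>\<mu>\<in>UNIV. \<Sum>\<nu>\<in>UNIV. gup L z \<mu> \<nu> *
            (dlt L \<mu> (py \<nu> f) z - (\<Sum>\<alpha>\<in>UNIV. Gam L z \<alpha> \<nu> \<mu> * py \<alpha> f z)))"
proof -
  let ?h = "gup L z" and ?G = "Gam L z" and ?fv = "\<lambda>\<nu>. py \<nu> f z" and ?dl = "\<lambda>\<alpha> \<nu>. dlt L \<alpha> (py \<nu> f) z"
  have dlt_Z: "dlt L a (\<lambda>w. \<Sum>\<nu>\<in>UNIV. gup L w a \<nu> * py \<nu> f w) z = (\<Sum>\<nu>\<in>UNIV.
      (- (\<Sum>c\<in>UNIV. ?G a a c * ?h c \<nu>) - (\<Sum>b\<in>UNIV. ?h a b * ?G \<nu> a b)) * ?fv \<nu> + ?h a \<nu> * ?dl a \<nu>)" for a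
    using z f by (simp add: dlt_sum dlt_mult smooth_intros dlt_gup_compat)
  define P where "P = (\<Sum>a\<in>UNIV. \<Sum>\<nu>\<in>UNIV. ?h a \<nu> * ?dl a \<nu>)"
  define P2 where "P2 = (\<Sum>a\<in>UNIV. \<Sum>\<nu>\<in>UNIV. (\<Sum>c\<in>UNIV. ?G a a c * ?h c \<nu>) * ?fv \<nu>)"
  define P3 where "P3 = (\<Sum>a\<in>UNIV. \<Sum>\<nu>\<in>UNIV. (\<Sum>b\<in>UNIV. ?h a b * ?G \<nu> a b) * ?fv \<nu>)"
  define R where "R = (\<Sum>a\<in>UNIV. \<Sum>\<mu>\<in>UNIV. ?G a \<mu> a * (\<Sum>\<nu>\<in>UNIV. ?h \<mu> \<nu> * ?fv \<nu>))"
  define Q where "Q = (\<Sum>\<mu>\<in>UNIV. \<Sum>\<nu>\<in>UNIV. ?h \<mu> \<nu> * (\<Sum>\<alpha>\<in>UNIV. ?G \<alpha> \<nu> \<mu> * ?fv \<alpha>))"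
  have lhs: "divHC L (\<lambda>w \<mu>. \<Sum>\<nu>\<in>UNIV. gup L w \<mu> \<nu> * py \<nu> f w) z = P - P2 - P3 + R"
    unfolding divHC_def dlt_Z P_def P2_def P3_def R_def
    by (simp add: sum.distrib sum_subtractf algebra_simps)
  have rhs: "(\<Sum>\<mu>\<in>UNIV. \<Sum>\<nu>\<in>UNIV. ?h \<mu> \<nu> * (?dl \<mu> \<nu> - (\<Sum>\<alpha>\<in>UNIV. ?G \<alpha> \<nu> \<mu> * ?fv \<alpha>))) = P - Q"
    unfolding P_def Q_def by (simp add: sum.distrib sum_subtractf algebra_simps)
  have "P2 = (\<Sum>a\<in>UNIV. \<Sum>\<nu>\<in>UNIV. \<Sum>c\<in>UNIV. ?G a a c * (?h c \<nu> * ?fv \<nu>))"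
    unfolding P2_def by (simp add: sum_distrib_right mult.assoc)
  also have "\<dots> = (\<Sum>a\<in>UNIV. \<Sum>c\<in>UNIV. \<Sum>\<nu>\<in>UNIV. ?G a a c * (?h c \<nu> * ?fv \<nu>))"
    by (rule sum.cong[OF refl], rule sum.swap)
  also have "\<dots> = R" unfolding R_def using Gam_sym[OF z] by (simp add: sum_distrib_left)
  finally have "P2 = R" .
  have "P3 = (\<Sum>a\<in>UNIV. \<Sum>\<nu>\<in>UNIV. \<Sum>b\<in>UNIV. ?h a b * ?G \<nu> a b * ?fv \<nu>)"
    unfolding P3_def by (simp add: sum_distrib_right)
  also have "\<dots> = (\<Sum>a\<in>UNIV. \<Sum>b\<in>UNIV. \<Sum>\<nu>\<in>UNIV. ?h a b * ?G \<nu> a b * ?fv \<nu>)"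
    by (rule sum.cong[OF refl], rule sum.swap)
  also have "\<dots> = Q" unfolding Q_def using Gam_sym[OF z] by (simp add: sum_distrib_left mult.assoc)
  finally have "P3 = Q" .
  show ?thesis unfolding lhs rhs \<open>P2 = R\<close> \<open>P3 = Q\<close> by simp
qed


lemma py_gup_trace: assumes z: "z \<in> E"
  shows "(\<Sum>n\<in>UNIV. py n (\<lambda>w. gup L w n m) z) = - 2 * Iup L z m"
proof -
  have "(\<Sum>n\<in>UNIV. \<Sum>b\<in>UNIV. \<Sum>c\<in>UNIV. gup L z n b * py n (\<lambda>w. glow L w b c) z * gup L z c m)
      = (\<Sum>c\<in>UNIV. \<Sum>n\<in>UNIV. \<Sum>b\<in>UNIV. gup L z n b * py n (\<lambda>w. glow L w b c) z * gup L z c m)"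
    by (rule sum_rotate3)
  also have "\<dots> = (\<Sum>c\<in>UNIV. gup L z m c * (2 * Ilow L z c))"
    unfolding Ilow_def Cartan_def using gup_sym[OF z]
    by (simp add: sum_distrib_left sum_distrib_right mult_ac)
  also have "\<dots> = 2 * Iup L z m" unfolding Iup_def by (simp add: sum_distrib_left mult_ac)
  finally show ?thesis by (simp add: py_gup[OF z] sum_negf)
qed

lemma trace_Berwald_minus_Gam: assumes z: "z \<in> E"
  shows "(\<Sum>n\<in>UNIV. \<Sum>\<mu>\<in>UNIV. gup L z n \<mu> * (\<Sum>s\<in>UNIV. Berwald L z s \<mu> n * X s))
     - (\<Sum>\<mu>\<in>UNIV. \<Sum>\<nu>\<in>UNIV. gup L z \<mu> \<nu> * (\<Sum>s\<in>UNIV. Gam L z s \<nu> \<mu> * X s))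
     = (\<Sum>s\<in>UNIV. Jup L z s * X s)"
proof -
  have "(\<Sum>n\<in>UNIV. \<Sum>\<mu>\<in>UNIV. gup L z n \<mu> * (\<Sum>s\<in>UNIV. Berwald L z s \<mu> n * X s))
      = (\<Sum>s\<in>UNIV. \<Sum>n\<in>UNIV. \<Sum>\<mu>\<in>UNIV. gup L z n \<mu> * Berwald L z s \<mu> n * X s)"
    by (subst sum_rotate3[symmetric]) (simp add: sum_distrib_left mult.assoc)
  moreover have "(\<Sum>\<mu>\<in>UNIV. \<Sum>\<nu>\<in>UNIV. gup L z \<mu> \<nu> * (\<Sum>s\<in>UNIV. Gam L z s \<nu> \<mu> * X s))
      = (\<Sum>s\<in>UNIV. \<Sum>\<mu>\<in>UNIV. \<Sum>\<nu>\<in>UNIV. gup L z \<mu> \<nu> * Gam L z s \<nu> \<mu> * X s)"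
    by (subst sum_rotate3[symmetric]) (simp add: sum_distrib_left mult.assoc)
  moreover have "(\<Sum>n\<in>UNIV. \<Sum>\<mu>\<in>UNIV. gup L z n \<mu> * Berwald L z s \<mu> n)
      - (\<Sum>\<mu>\<in>UNIV. \<Sum>\<nu>\<in>UNIV. gup L z \<mu> \<nu> * Gam L z s \<nu> \<mu>) = Jup L z s" for s
    unfolding trace_Lands_eq_Jup[OF z, symmetric] Lands_def
    by (simp add: sum_subtractf right_diff_distrib)
  ultimately show ?thesis
    by (simp add: sum_distrib_right[symmetric] sum_subtractf[symmetric] left_diff_distrib[symmetric])
qed

lemma divHC_vertical_gradient_Cartan_Landsberg:
  assumes z: "z \<in> E" and f: "smooth f"
  shows "(\<Sum>\<mu>\<in>UNIV. \<Sum>\<nu>\<in>UNIV. gup L z \<mu> \<nu> *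
                (dlt L \<mu> (py \<nu> f) z - (\<Sum>\<alpha>\<in>UNIV. Gam L z \<alpha> \<nu> \<mu> * py \<alpha> f z)))
           = (\<Sum>\<nu>\<in>UNIV. py \<nu> (\<lambda>w. \<Sum>\<mu>\<in>UNIV. gup L w \<nu> \<mu> * dlt L \<mu> f w) z)
             + 2 * (\<Sum>\<mu>\<in>UNIV. Iup L z \<mu> * dlt L \<mu> f z)
             + (\<Sum>\<alpha>\<in>UNIV. Jup L z \<alpha> * py \<alpha> f z)"
proof -
  let ?h = "gup L z" and ?fv = "\<lambda>\<nu>. py \<nu> f z" and ?N = "Nconn L z"
  define R1 where "R1 = (\<Sum>n\<in>UNIV. \<Sum>\<mu>\<in>UNIV. py n (\<lambda>w. gup L w n \<mu>) z * dlt L \<mu> f z)"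
  define R2 where "R2 = (\<Sum>n\<in>UNIV. \<Sum>\<mu>\<in>UNIV. ?h n \<mu> * (py n (px \<mu> f) z - (\<Sum>s\<in>UNIV. ?N s \<mu> * py n (py s f) z)))"
  define R3 where "R3 = (\<Sum>n\<in>UNIV. \<Sum>\<mu>\<in>UNIV. ?h n \<mu> * (\<Sum>s\<in>UNIV. Berwald L z s \<mu> n * ?fv s))"
  define S2 where "S2 = (\<Sum>\<mu>\<in>UNIV. \<Sum>\<nu>\<in>UNIV. ?h \<mu> \<nu> * (px \<mu> (py \<nu> f) z - (\<Sum>s\<in>UNIV. ?N s \<mu> * py s (py \<nu> f) z)))"
  define S3 where "S3 = (\<Sum>\<mu>\<in>UNIV. \<Sum>\<nu>\<in>UNIV. ?h \<mu> \<nu> * (\<Sum>\<alpha>\<in>UNIV. Gam L z \<alpha> \<nu> \<mu> * ?fv \<alpha>))"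
  have py_Z: "py n (\<lambda>w. \<Sum>\<mu>\<in>UNIV. gup L w n \<mu> * dlt L \<mu> f w) z =
      (\<Sum>\<mu>\<in>UNIV. py n (\<lambda>w. gup L w n \<mu>) z * dlt L \<mu> f z + ?h n \<mu> * py n (dlt L \<mu> f) z)" for n
    using z f by (simp add: partial_rules smooth_intros)
  have rhs: "(\<Sum>\<nu>\<in>UNIV. py \<nu> (\<lambda>w. \<Sum>\<mu>\<in>UNIV. gup L w \<nu> \<mu> * dlt L \<mu> f w) z) = R1 + R2 - R3"
    unfolding py_Z py_dlt[OF z f] R1_def R2_def R3_def
    by (simp add: sum.distrib sum_subtractf algebra_simps)
  have lhs: "(\<Sum>\<mu>\<in>UNIV. \<Sum>\<nu>\<in>UNIV. ?h \<mu> \<nu> * (dlt L \<mu> (py \<nu> f) z - (\<Sum>\<alpha>\<in>UNIV. Gam L z \<alpha> \<nu> \<mu> * ?fv \<alpha>)))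
      = S2 - S3"
    unfolding S2_def S3_def dlt_def by (simp add: sum.distrib sum_subtractf algebra_simps)
  have "R1 = (\<Sum>\<mu>\<in>UNIV. (\<Sum>n\<in>UNIV. py n (\<lambda>w. gup L w n \<mu>) z) * dlt L \<mu> f z)"
    unfolding R1_def by (subst sum.swap) (simp add: sum_distrib_right)
  then have R1: "R1 = - 2 * (\<Sum>\<mu>\<in>UNIV. Iup L z \<mu> * dlt L \<mu> f z)"
    by (simp add: py_gup_trace[OF z] sum_distrib_left mult.assoc)
  have "R2 = (\<Sum>\<mu>\<in>UNIV. \<Sum>n\<in>UNIV. ?h n \<mu> * (py n (px \<mu> f) z - (\<Sum>s\<in>UNIV. ?N s \<mu> * py n (py s f) z)))"
    unfolding R2_def by (rule sum.swap)
  also have "\<dots> = S2"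
    unfolding S2_def using gup_sym[OF z] px_py_commute[OF f z] py_py_commute[OF f z] by simp
  finally have R2: "R2 = S2" .
  have R3: "R3 - S3 = (\<Sum>\<alpha>\<in>UNIV. Jup L z \<alpha> * py \<alpha> f z)"
    unfolding R3_def S3_def by (rule trace_Berwald_minus_Gam[OF z])
  show ?thesis unfolding lhs rhs R1 R2 using R3 by simp
qed

end


theorem mainTheorem7:
  fixes U :: "(real^'n::finite) set"
    and L f :: "'n pt \<Rightarrow> real"
  defines "E \<equiv> U \<times> (UNIV - {0})"
  assumes U_open: "open U"
    and L_smooth: "smooth_on E L"
    and L_hom: "\<And>x y t. x \<in> U \<Longrightarrow> y \<noteq> 0 \<Longrightarrow> t > 0 \<Longrightarrow> L (x, t *\<^sub>R y) = t\<^sup>2 * L (x, y)"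
    and L_nondeg: "\<And>z. z \<in> E \<Longrightarrow> det (gmat L z) \<noteq> 0"
    and f_smooth: "smooth_on E f"
    and z_in: "z \<in> E"
  shows "divHC L (\<lambda>w \<mu>. \<Sum>\<nu>\<in>UNIV. gup L w \<mu> \<nu> * py \<nu> f w) z
           = (\<Sum>\<mu>\<in>UNIV. \<Sum>\<nu>\<in>UNIV. gup L z \<mu> \<nu> *
                (dlt L \<mu> (py \<nu> f) z - (\<Sum>\<alpha>\<in>UNIV. Gam L z \<alpha> \<nu> \<mu> * py \<alpha> f z)))
       \<and> (\<Sum>\<mu>\<in>UNIV. \<Sum>\<nu>\<in>UNIV. gup L z \<mu> \<nu> *
                (dlt L \<mu> (py \<nu> f) z - (\<Sum>\<alpha>\<in>UNIV. Gam L z \<alpha> \<nu> \<mu> * py \<alpha> f z)))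
           = (\<Sum>\<nu>\<in>UNIV. py \<nu> (\<lambda>w. \<Sum>\<mu>\<in>UNIV. gup L w \<nu> \<mu> * dlt L \<mu> f w) z)
             + 2 * (\<Sum>\<mu>\<in>UNIV. Iup L z \<mu> * dlt L \<mu> f z)
             + (\<Sum>\<alpha>\<in>UNIV. Jup L z \<alpha> * py \<alpha> f z)"
proof -
  interpret finsler_chart U L
    using U_open L_smooth L_hom L_nondeg unfolding E_def by unfold_locales
  show ?thesis
    using divHC_vertical_gradient divHC_vertical_gradient_Cartan_Landsberg z_in f_smooth unfolding E_def by blast
qed

end
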